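(* Let $\mathcal I=(\Omega,\mathbb P,\mathcal S,\mathcal T,Y)$ be an information structure that satisfies $\delta$-approximate rectangle substitutes, and let $\epsilon=\mathbb E[(\mu_\sigma-\mu_\tau)^2]$. Then $\mathbb E[(\mu_{\sigma\tau}-\mu_\tau)^2]\le 6\epsilon^{1/3}+\delta$.
   Context: An information structure is a tuple $\mathcal I=(\Omega,\mathbb P,\mathcal S,\mathcal T,Y)$: a probability space $(\Omega,\mathbb P)$, random variables $\sigma:\Omega\to\mathcal S$ (Alice's signal), $\tau:\Omega\to\mathcal T$ (Bob's signal), and $Y:\Omega\to[0,1]$. Notation: $\mu_{\sigma\tau}=\mathbb E[Y\mid\sigma,\tau]$, $\mu_\sigma=\mathbb E[Y\mid\sigma]$, $\mu_\tau=\mathbb E[Y\mid\tau]$; for measurable $S\subseteq\mathcal S$, $T\subseteq\mathcal T$: $\mu_{\sigma T}=\mathbb E[Y\mid\sigma,\tau\in T]$, $\mu_{S\tau}=\mathbb E[Y\mid\sigma\in S,\tau]$, $\mu_{ST}=\mathbb E[Y\mid\sigma\in S,\tau\in T]$. $\mathcal I$ satisfies $\delta$-approximate rectangle substitutes if for every partition of $\mathcal S\times\mathcal T$ into (measurable) rectangles, writing $S_{\sigma,\tau}\times T_{\sigma,\tau}$ for the rectangle containing $(\sigma,\tau)$, $\mathbb E[(\mu_{\sigma\tau}-\mu_{S_{\sigma,\tau}\tau})^2]\le\mathbb E[(\mu_{\sigma T_{\sigma,\tau}}-\mu_{S_{\sigma,\tau}T_{\sigma,\tau}})^2]+\delta$.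 *)

theory Defs
  imports "HOL-Probability.Probability"
begin

definition info_structure ::
  "'a measure \<Rightarrow> 's measure \<Rightarrow> 't measure \<Rightarrow> ('a \<Rightarrow> 's) \<Rightarrow> ('a \<Rightarrow> 't) \<Rightarrow> ('a \<Rightarrow> real) \<Rightarrow> bool" where
  "info_structure M Ms Mt sg tu Y \<longleftrightarrow>
     prob_space M \<and> sg \<in> M \<rightarrow>\<^sub>M Ms \<and> tu \<in> M \<rightarrow>\<^sub>M Mt \<and> Y \<in> borel_measurable M \<and>
     (\<forall>\<omega>\<in>space M. 0 \<le> Y \<omega> \<and> Y \<omega> \<le> 1)"

definition preimgs :: "'a measure \<Rightarrow> ('a \<Rightarrow> 'b) \<Rightarrow> 'b measure \<Rightarrow> 'a set set" where
  "preimgs M f N = {f -` A \<inter> space M | A. A \<in> sets N}"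

definition sig_gen :: "'a measure \<Rightarrow> 'a set set \<Rightarrow> 'a measure" where
  "sig_gen M G = sigma (space M) G"

definition mu_st :: "'a measure \<Rightarrow> 's measure \<Rightarrow> 't measure \<Rightarrow> ('a \<Rightarrow> 's) \<Rightarrow> ('a \<Rightarrow> 't) \<Rightarrow> ('a \<Rightarrow> real) \<Rightarrow> 'a \<Rightarrow> real" where
  "mu_st M Ms Mt sg tu Y = real_cond_exp M (sig_gen M (preimgs M sg Ms \<union> preimgs M tu Mt)) Y"

definition mu_s :: "'a measure \<Rightarrow> 's measure \<Rightarrow> ('a \<Rightarrow> 's) \<Rightarrow> ('a \<Rightarrow> real) \<Rightarrow> 'a \<Rightarrow> real" where
  "mu_s M Ms sg Y = real_cond_exp M (sig_gen M (preimgs M sg Ms)) Y"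

text \<open>mu_{sigma T} = E[Y | sigma, tau \<in> T]: conditional expectation given sigma and the event
  {tau \<in> T}; on the event {tau \<in> T} its value is E[Y | sigma, tau \<in> T].\<close>
definition mu_sT :: "'a measure \<Rightarrow> 's measure \<Rightarrow> ('a \<Rightarrow> 's) \<Rightarrow> ('a \<Rightarrow> 't) \<Rightarrow> ('a \<Rightarrow> real) \<Rightarrow> 't set \<Rightarrow> 'a \<Rightarrow> real" where
  "mu_sT M Ms sg tu Y T = real_cond_exp M (sig_gen M (preimgs M sg Ms \<union> {tu -` T \<inter> space M})) Y"

definition rect_event :: "'a measure \<Rightarrow> ('a \<Rightarrow> 's) \<Rightarrow> ('a \<Rightarrow> 't) \<Rightarrow> 's set \<Rightarrow> 't set \<Rightarrow> 'a set" where
  "rect_event M sg tu S T = {\<omega>\<in>space M. sg \<omega> \<in> S \<and> tu \<omega> \<in> T}"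

definition mu_ST :: "'a measure \<Rightarrow> ('a \<Rightarrow> 's) \<Rightarrow> ('a \<Rightarrow> 't) \<Rightarrow> ('a \<Rightarrow> real) \<Rightarrow> 's set \<Rightarrow> 't set \<Rightarrow> real" where
  "mu_ST M sg tu Y S T =
     (\<integral>\<omega>. indicator (rect_event M sg tu S T) \<omega> * Y \<omega> \<partial>M) / measure M (rect_event M sg tu S T)"

text \<open>delta-approximate rectangle substitutes, quantifying over all countable partitions of
  S x T into measurable rectangles A i x B i (empty rectangles allowed, so finite partitions
  are included).\<close>
definition approx_rect_subst ::
  "'a measure \<Rightarrow> 's measure \<Rightarrow> 't measure \<Rightarrow> ('a \<Rightarrow> 's) \<Rightarrow> ('a \<Rightarrow> 't) \<Rightarrow> ('a \<Rightarrow> real) \<Rightarrow> real \<Rightarrow> bool" where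
  "approx_rect_subst M Ms Mt sg tu Y \<delta> \<longleftrightarrow>
    (\<forall>(A :: nat \<Rightarrow> 's set) (B :: nat \<Rightarrow> 't set).
       (\<forall>i. A i \<in> sets Ms \<and> B i \<in> sets Mt) \<and>
       disjoint_family (\<lambda>i. A i \<times> B i) \<and>
       (\<Union>i. A i \<times> B i) = space Ms \<times> space Mt \<longrightarrow>
       (\<Sum>i. \<integral>\<omega>. indicator (rect_event M sg tu (A i) (B i)) \<omega> *
                   (mu_st M Ms Mt sg tu Y \<omega> - mu_sT M Mt tu sg Y (A i) \<omega>)\<^sup>2 \<partial>M)
       \<le> (\<Sum>i. \<integral>\<omega>. indicator (rect_event M sg tu (A i) (B i)) \<omega> *
                   (mu_sT M Ms sg tu Y (B i) \<omega> - mu_ST M sg tu Y (A i) (B i))\<^sup>2 \<partial>M) + \<delta>)"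

end

theory Submission
  imports Defs
begin

(*
  Cut [0,1] into cells of width w and let E_j be the event that \<mu>_\<tau> lies in
  cell j.  These events are generated by \<tau>, so they come from a partition (B_j) of Bob's
  signal space, and rectangle substitutes for the rectangles S \<times> B_j bound
  E[(\<mu>_\<sigma>\<tau> - \<mu>_\<tau>)^2] by \<delta> plus the variance of \<mu>_\<sigma>B_j on each E_j.  On E_j that variance is
  at most P(E_j \<triangle> G_j) + E[(\<mu>_\<sigma> - \<mu>_\<tau>) Y; E_j] + w^2 P(E_j), where G_j is the event
  that \<mu>_\<sigma> lies in cell j.  Summing over j gives
  \<delta> + 2 P(\<mu>_\<sigma> and \<mu>_\<tau> lie in different cells) + E|\<mu>_\<sigma> - \<mu>_\<tau>| + w^2.
  Averaging over N shifted grids bounds the misclassification probability by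
  E|\<mu>_\<sigma> - \<mu>_\<tau>| / w + 1/N, and E|\<mu>_\<sigma> - \<mu>_\<tau>| \<le> \<surd>\<epsilon>; the choice w = \<epsilon>^(1/6) gives
  the bound.
*)

definition ae_bounded :: "'a measure \<Rightarrow> ('a \<Rightarrow> real) \<Rightarrow> bool" where
  "ae_bounded M f \<longleftrightarrow> f \<in> borel_measurable M \<and> (\<exists>B. AE x in M. \<bar>f x\<bar> \<le> B)"

lemma ae_bounded_mult [intro]: "ae_bounded M f \<Longrightarrow> ae_bounded M g \<Longrightarrow> ae_bounded M (\<lambda>x. f x * g x)"
proof -
  assume "ae_bounded M f" "ae_bounded M g"
  then obtain B C where "f \<in> borel_measurable M" "g \<in> borel_measurable M"
    and "AE x in M. \<bar>f x\<bar> \<le> B" "AE x in M. \<bar>g x\<bar> \<le> C"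
    unfolding ae_bounded_def by auto
  moreover from this(3,4) have "AE x in M. \<bar>f x * g x\<bar> \<le> \<bar>B\<bar> * \<bar>C\<bar>"
    by eventually_elim (auto simp: abs_mult intro!: mult_mono)
  ultimately show ?thesis unfolding ae_bounded_def by auto
qed

lemma ae_bounded_add [intro]: "ae_bounded M f \<Longrightarrow> ae_bounded M g \<Longrightarrow> ae_bounded M (\<lambda>x. f x + g x)"
proof -
  assume "ae_bounded M f" "ae_bounded M g"
  then obtain B C where "f \<in> borel_measurable M" "g \<in> borel_measurable M"
    and "AE x in M. \<bar>f x\<bar> \<le> B" "AE x in M. \<bar>g x\<bar> \<le> C"
    unfolding ae_bounded_def by auto
  moreover from this(3,4) have "AE x in M. \<bar>f x + g x\<bar> \<le> B + C"
    by eventually_elim auto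
  ultimately show ?thesis unfolding ae_bounded_def by auto
qed

lemma ae_bounded_uminus [intro]: "ae_bounded M f \<Longrightarrow> ae_bounded M (\<lambda>x. - f x)"
  unfolding ae_bounded_def by auto

lemma ae_bounded_diff [intro]: "ae_bounded M f \<Longrightarrow> ae_bounded M g \<Longrightarrow> ae_bounded M (\<lambda>x. f x - g x)"
  using ae_bounded_add[of M f "\<lambda>x. - g x"] by auto

lemma ae_bounded_abs [intro]: "ae_bounded M f \<Longrightarrow> ae_bounded M (\<lambda>x. \<bar>f x\<bar>)"
  unfolding ae_bounded_def by auto

lemma ae_bounded_power2 [intro]: "ae_bounded M f \<Longrightarrow> ae_bounded M (\<lambda>x. (f x)\<^sup>2)"
  unfolding power2_eq_square by (rule ae_bounded_mult)

lemma ae_bounded_const [intro]: "ae_bounded M (\<lambda>x. c)"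
  unfolding ae_bounded_def by auto

lemma ae_bounded_indicator [intro]: "A \<in> sets M \<Longrightarrow> ae_bounded M (indicator A)"
  unfolding ae_bounded_def by (auto intro!: exI[of _ 1] simp: indicator_def)

lemma ae_bounded_unit_interval:
  assumes "f \<in> borel_measurable M" "AE x in M. 0 \<le> f x \<and> f x \<le> 1"
  shows "ae_bounded M f"
proof -
  have "AE x in M. \<bar>f x\<bar> \<le> 1" using assms(2) by eventually_elim auto
  then show ?thesis using assms(1) unfolding ae_bounded_def by auto
qed

lemma (in finite_measure) integrable_ae_bounded: "ae_bounded M f \<Longrightarrow> integrable M f"
  unfolding ae_bounded_def using integrable_const_bound[of f] by auto

lemma integral_indicator_partition:
  fixes h :: "'a \<Rightarrow> real"
  assumes "\<And>j. j < n \<Longrightarrow> E j \<in> sets M"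
    and "\<And>x. x \<in> space M \<Longrightarrow> (\<Sum>j<n. indicator (E j) x) = (1::real)"
    and "integrable M h"
  shows "(\<Sum>j<n. \<integral>x. indicator (E j) x * h x \<partial>M) = (\<integral>x. h x \<partial>M)"
proof -
  have "(\<Sum>j<n. \<integral>x. indicator (E j) x * h x \<partial>M) = (\<integral>x. (\<Sum>j<n. indicator (E j) x * h x) \<partial>M)"
  proof (rule Bochner_Integration.integral_sum[symmetric])
    fix j assume "j \<in> {..<n}"
    then show "integrable M (\<lambda>x. indicator (E j) x * h x)"
      using integrable_real_mult_indicator[OF assms(1) assms(3)] by (simp add: mult.commute)
  qed
  also have "\<dots> = (\<integral>x. h x \<partial>M)"
    using assms(2) by (intro Bochner_Integration.integral_cong) (auto simp: sum_distrib_right[symmetric])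
  finally show ?thesis .
qed

lemma sum_abs_indicator_level_sets:
  fixes a b n :: nat
  assumes "a < n" "b < n"
  shows "(\<Sum>j<n. \<bar>of_bool (a = j) - of_bool (b = j)\<bar>) = (if a = b then 0 else (2::real))"
proof (cases "a = b")
  case False
  then have "(\<Sum>j<n. \<bar>of_bool (a = j) - of_bool (b = j)\<bar>) = (\<Sum>j<n. of_bool (a = j) + of_bool (b = j) :: real)"
    by (intro sum.cong) auto
  also have "\<dots> = 2" using assms by (simp add: sum.distrib)
  finally show ?thesis using False by simp
qed simp

lemma preimgs_subset_sets: "f \<in> M \<rightarrow>\<^sub>M N \<Longrightarrow> preimgs M f N \<subseteq> sets M"
  unfolding preimgs_def by (auto intro: measurable_sets)

lemma (in finite_measure) sum_integral_abs_indicator_level_sets: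
  fixes f g :: "'a \<Rightarrow> nat"
  assumes [measurable]: "f \<in> M \<rightarrow>\<^sub>M count_space UNIV" "g \<in> M \<rightarrow>\<^sub>M count_space UNIV"
    and less: "\<And>x. f x < n" "\<And>x. g x < n"
  shows "(\<Sum>j<n. \<integral>x. \<bar>indicator {x\<in>space M. f x = j} x - indicator {x\<in>space M. g x = j} x\<bar> \<partial>M)
    = 2 * measure M {x\<in>space M. f x \<noteq> g x}"
proof -
  have "(\<Sum>j<n. \<integral>x. \<bar>indicator {x\<in>space M. f x = j} x - indicator {x\<in>space M. g x = j} x :: real\<bar> \<partial>M)
      = (\<integral>x. (\<Sum>j<n. \<bar>indicator {x\<in>space M. f x = j} x - indicator {x\<in>space M. g x = j} x :: real\<bar>) \<partial>M)"
    by (intro Bochner_Integration.integral_sum[symmetric] integrable_ae_bounded ae_bounded_abs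
        ae_bounded_diff ae_bounded_indicator) auto
  also have "\<dots> = (\<integral>x. 2 * indicator {x\<in>space M. f x \<noteq> g x} x \<partial>M)"
    using sum_abs_indicator_level_sets[OF less]
    by (intro Bochner_Integration.integral_cong) (auto simp: indicator_def)
  finally show ?thesis by (simp add: Int_absorb2)
qed

lemma sum_indicator_disjoint_eq_1:
  fixes n :: nat
  assumes disj: "\<And>i j. i < n \<Longrightarrow> j < n \<Longrightarrow> i \<noteq> j \<Longrightarrow> E i \<inter> E j = {}"
    and x: "x \<in> (\<Union>j<n. E j)"
  shows "(\<Sum>j<n. indicator (E j) x) = (1::real)"
proof -
  obtain k where k: "k < n" "x \<in> E k" using x by auto
  have "(\<Sum>j<n. indicator (E j) x) = (\<Sum>j<n. if j = k then 1 else 0 :: real)"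
    using disj[of _ k] k by (intro sum.cong) (auto simp: indicator_def)
  also have "\<dots> = 1" using k by simp
  finally show ?thesis .
qed

lemma preimage_partition_lift:
  fixes n :: nat
  assumes f: "f \<in> M \<rightarrow>\<^sub>M N" and n: "0 < n"
    and E: "\<And>j. j < n \<Longrightarrow> E j \<in> preimgs M f N"
    and disj: "\<And>i j. i < n \<Longrightarrow> j < n \<Longrightarrow> i \<noteq> j \<Longrightarrow> E i \<inter> E j = {}"
    and cover: "(\<Union>j<n. E j) = space M"
  obtains B where "\<And>j. B j \<in> sets N" "disjoint_family B" "(\<Union>j. B j) = space N"
    "\<And>j. j < n \<Longrightarrow> f -` B j \<inter> space M = E j" "\<And>j. n \<le> j \<Longrightarrow> B j = {}"
proof -
  have "\<forall>j. \<exists>C. j < n \<longrightarrow> C \<in> sets N \<and> E j = f -` C \<inter> space M"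
    using E unfolding preimgs_def by blast
  then obtain C0 where C0: "\<And>j. j < n \<Longrightarrow> C0 j \<in> sets N" "\<And>j. j < n \<Longrightarrow> E j = f -` C0 j \<inter> space M"
    by metis
  define C where "C j = (if j < n - 1 then C0 j else if j = n - 1 then space N else {})" for j
  have C_sets: "range C \<subseteq> sets N" using C0(1) by (auto simp: C_def)
  have pre_C: "f -` C j \<inter> space M = (if j < n - 1 then E j else if j = n - 1 then space M else {})" for j
    using C0(2) f by (auto simp: C_def measurable_def)
  have pre: "f -` disjointed C j \<inter> space M = (f -` C j \<inter> space M) - (\<Union>i<j. f -` C i \<inter> space M)" for j
    by (auto simp: disjointed_def atLeast0LessThan)
  show thesis
  proof
    show "disjointed C j \<in> sets N" for j using sets.range_disjointed_sets[OF C_sets] by auto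
    show "disjoint_family (disjointed C)" by (rule disjoint_family_disjointed)
    show "(\<Union>j. disjointed C j) = space N"
      unfolding UN_disjointed_eq using C_sets sets.sets_into_space by (auto simp: C_def intro!: exI[of _ "n - 1"])
    show "disjointed C j = {}" if "n \<le> j" for j
    proof -
      have "\<not> j < n - 1" "j \<noteq> n - 1" using that n by auto
      then have "C j = {}" unfolding C_def by simp
      then show ?thesis using disjointed_subset[of C j] by blast
    qed
    show "f -` disjointed C j \<inter> space M = E j" if j: "j < n" for j
    proof (cases "j < n - 1")
      case True
      then have "E j \<inter> E i = {}" if "i < j" for i using disj[of j i] that j by auto
      then show ?thesis using True unfolding pre pre_C by auto
    next
      case False
      then have j: "j = n - 1" using j by simp
      have "x \<in> E j" if "x \<in> space M" "\<forall>i<j. x \<notin> E i" for x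
      proof -
        obtain k where "k < n" "x \<in> E k" using cover \<open>x \<in> space M\<close> by auto
        moreover from this have "k = j" using that(2) j by (metis diff_Suc_1 less_Suc_eq n Suc_pred)
        ultimately show ?thesis by simp
      qed
      moreover have "E j \<subseteq> space M" using cover j n by auto
      moreover have "E j \<inter> E i = {}" if "i < j" for i using disj[of j i] that j n by auto
      ultimately show ?thesis using False unfolding pre pre_C by (auto simp: j)
    qed
  qed
qed

section \<open>Adjoining an event to a sub-\<sigma>-algebra\<close>

definition adjoin_event :: "'a measure \<Rightarrow> 'a set \<Rightarrow> 'a measure" where
  "adjoin_event F E = sigma (space F) (sets F \<union> {E})"

lemma sigma_sets_insert_split:
  assumes "sigma_algebra \<Omega> S" and "E \<subseteq> \<Omega>" and "A \<in> sigma_sets \<Omega> (S \<union> {E})"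
  obtains C D where "C \<in> S" "D \<in> S" "A = (C \<inter> E) \<union> (D - E)"
proof -
  interpret sigma_algebra \<Omega> S by fact
  have "\<exists>C\<in>S. \<exists>D\<in>S. A = (C \<inter> E) \<union> (D - E)"
    using assms(3)
  proof (induction rule: sigma_sets.induct)
    case (Basic a)
    then show ?case
    proof
      assume "a \<in> S"
      then show ?thesis by (intro bexI[of _ a]) auto
    next
      assume "a \<in> {E}"
      then show ?thesis using \<open>E \<subseteq> \<Omega>\<close> by (intro bexI[of _ \<Omega>] bexI[of _ "{}"]) auto
    qed
  next
    case Empty
    then show ?case by (intro bexI[of _ "{}"]) auto
  next
    case (Compl a)
    then obtain C D where "C \<in> S" "D \<in> S" "a = (C \<inter> E) \<union> (D - E)" by auto
    then have "\<Omega> - a = ((\<Omega> - C) \<inter> E) \<union> ((\<Omega> - D) - E)" "\<Omega> - C \<in> S" "\<Omega> - D \<in> S"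
      using \<open>E \<subseteq> \<Omega>\<close> by auto
    then show ?case by blast
  next
    case (Union a)
    then obtain C D where "\<And>i. C i \<in> S" "\<And>i. D i \<in> S" "\<And>i. a i = (C i \<inter> E) \<union> (D i - E)"
      by metis
    then have "(\<Union>i. a i) = ((\<Union>i. C i) \<inter> E) \<union> ((\<Union>i. D i) - E)" "(\<Union>i. C i) \<in> S" "(\<Union>i. D i) \<in> S"
      by auto
    then show ?case by blast
  qed
  then show ?thesis using that by blast
qed

lemma
  assumes "subalgebra M F" and "E \<in> sets M"
  shows subalgebra_adjoin_event: "subalgebra M (adjoin_event F E)"
    and subalgebra_adjoin_event_base: "subalgebra (adjoin_event F E) F"
    and sets_adjoin_event: "sets (adjoin_event F E) = sigma_sets (space M) (sets F \<union> {E})"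
    and event_in_adjoin_event: "E \<in> sets (adjoin_event F E)"
proof -
  have space: "space F = space M" using assms(1) by (simp add: subalgebra_def)
  have into_space: "sets F \<union> {E} \<subseteq> Pow (space M)"
    using assms sets.sets_into_space by (auto simp: subalgebra_def dest: sets.sets_into_space)
  show sets: "sets (adjoin_event F E) = sigma_sets (space M) (sets F \<union> {E})"
    unfolding adjoin_event_def space using into_space by (rule sets_measure_of)
  show "subalgebra M (adjoin_event F E)"
    unfolding subalgebra_def sets using assms into_space
    by (auto simp: adjoin_event_def space subalgebra_def intro!: sets.sigma_sets_subset)
  show "subalgebra (adjoin_event F E) F"
    unfolding subalgebra_def sets using into_space by (auto simp: adjoin_event_def space)
  show "E \<in> sets (adjoin_event F E)" unfolding sets by (auto intro: sigma_sets.Basic)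
qed

section \<open>Shifted grids\<close>

lemma card_separating_shifts_le:
  fixes a b :: int and N :: nat
  assumes N: "0 < N" and ab: "a \<le> b"
  shows "card {k. k < N \<and> (a + int k) div int N \<noteq> (b + int k) div int N} \<le> nat (b - a)"
proof -
  let ?K = "{k. k < N \<and> (a + int k) div int N \<noteq> (b + int k) div int N}"
  txt \<open>A separating shift \<open>k\<close> is recovered from the multiple of \<open>N\<close> it places in \<open>(a + k, b + k]\<close>.\<close>
  have "?K \<subseteq> (\<lambda>j. nat ((- j) mod int N)) ` {a<..b}"
  proof
    fix k assume "k \<in> ?K"
    then have k: "k < N" "(a + int k) div int N \<noteq> (b + int k) div int N" by auto
    define q where "q = (b + int k) div int N"
    have "(a + int k) div int N \<le> q" unfolding q_def using ab N by (intro zdiv_mono1) auto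
    with k(2) have "(a + int k) div int N + 1 \<le> q" unfolding q_def by linarith
    have "a + int k < ((a + int k) div int N + 1) * int N"
      using N pos_mod_bound[of "int N" "a + int k"] div_mult_mod_eq[of "a + int k" "int N"]
      unfolding distrib_right by linarith
    also have "\<dots> \<le> q * int N" using \<open>(a + int k) div int N + 1 \<le> q\<close> by (intro mult_right_mono) auto
    finally have "a + int k < q * int N" .
    moreover have "q * int N \<le> b + int k"
      unfolding q_def using N pos_mod_sign[of "int N" "b + int k"] div_mult_mod_eq[of "b + int k" "int N"]
      by linarith
    moreover have "(- (q * int N - int k)) mod int N = int k"
    proof -
      have "- (q * int N - int k) = int k + (- q) * int N" by simp
      then show ?thesis using k(1) by (simp only: mod_mult_self1) simp
    qed
    ultimately show "k \<in> (\<lambda>j. nat ((- j) mod int N)) ` {a<..b}"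
      by (intro image_eqI[of _ _ "q * int N - int k"]) auto
  qed
  then have "card ?K \<le> card {a<..b}" by (rule surj_card_le[OF finite_greaterThanAtMost_int])
  then show ?thesis by simp
qed

lemma card_separating_shifts_le_abs:
  fixes a b :: int and N :: nat
  assumes "0 < N"
  shows "card {k. k < N \<and> (a + int k) div int N \<noteq> (b + int k) div int N} \<le> nat \<bar>a - b\<bar>"
proof (cases "a \<le> b")
  case True
  then show ?thesis using card_separating_shifts_le[OF assms True] by simp
next
  case False
  then show ?thesis using card_separating_shifts_le[OF assms, of b a] by (simp add: eq_commute)
qed

lemma floor_divide_diff_le:
  fixes x y h :: real
  assumes "0 < h"
  shows "\<bar>\<lfloor>x / h\<rfloor> - \<lfloor>y / h\<rfloor>\<bar> \<le> \<bar>x - y\<bar> / h + 1"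
proof -
  have "\<bar>x / h - y / h\<bar> = \<bar>x - y\<bar> / h" using assms by (simp add: diff_divide_distrib[symmetric])
  moreover have "\<bar>real_of_int (\<lfloor>x / h\<rfloor> - \<lfloor>y / h\<rfloor>)\<bar> < \<bar>x / h - y / h\<bar> + 1"
    using floor_correct[of "x / h"] floor_correct[of "y / h"] by linarith
  ultimately show ?thesis by linarith
qed

text \<open>The index \<open>q\<close> of the cell \<open>[(q N - k) h, ((q + 1) N - k) h)\<close> containing \<open>x\<close> in the grid of mesh
  \<open>N h\<close> shifted by \<open>k h\<close>.\<close>
definition shifted_bucket :: "real \<Rightarrow> nat \<Rightarrow> nat \<Rightarrow> real \<Rightarrow> int" where
  "shifted_bucket h N k x = (\<lfloor>x / h\<rfloor> + int k) div int N"

lemma measurable_shifted_bucket [measurable]: "shifted_bucket h N k \<in> borel \<rightarrow>\<^sub>M count_space UNIV"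
  unfolding shifted_bucket_def by measurable

lemma shifted_bucket_mono:
  assumes "0 < h" "0 < N" "x \<le> y"
  shows "shifted_bucket h N k x \<le> shifted_bucket h N k y"
  unfolding shifted_bucket_def using assms
  by (intro zdiv_mono1 add_right_mono floor_mono divide_right_mono) auto

lemma shifted_bucket_bounds:
  fixes k N :: nat
  assumes h: "0 < h" and N: "0 < N" and x: "0 \<le> x"
  defines "q \<equiv> shifted_bucket h N k x"
  shows "0 \<le> q" and "real_of_int (q * int N - int k) * h \<le> x"
    and "x \<le> real_of_int (q * int N - int k) * h + real N * h"
proof -
  have floor_nonneg: "0 \<le> \<lfloor>x / h\<rfloor>" using h x by simp
  then show "0 \<le> q" unfolding q_def shifted_bucket_def using N by (simp add: pos_imp_zdiv_nonneg_iff)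
  have q: "q * int N \<le> \<lfloor>x / h\<rfloor> + int k" "\<lfloor>x / h\<rfloor> + int k < q * int N + int N"
    unfolding q_def shifted_bucket_def
    using N pos_mod_sign[of "int N" "\<lfloor>x / h\<rfloor> + int k"] pos_mod_bound[of "int N" "\<lfloor>x / h\<rfloor> + int k"]
      div_mult_mod_eq[of "\<lfloor>x / h\<rfloor> + int k" "int N"] by linarith+
  have "real_of_int (q * int N - int k) \<le> x / h" using q(1) floor_correct[of "x / h"] by linarith
  then show "real_of_int (q * int N - int k) * h \<le> x" using h by (simp add: le_divide_eq)
  have "x / h \<le> real_of_int (q * int N - int k) + real N" using q(2) floor_correct[of "x / h"] by linarith
  then show "x \<le> real_of_int (q * int N - int k) * h + real N * h"
    using h by (simp add: divide_le_eq distrib_right)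
qed

text \<open>Clamping to the cells that meet [0,1] leaves only finitely many cell indices.\<close>
definition shifted_cell :: "real \<Rightarrow> nat \<Rightarrow> nat \<Rightarrow> real \<Rightarrow> nat" where
  "shifted_cell h N k x = nat (min (shifted_bucket h N k x) (shifted_bucket h N k 1))"

definition cell_start :: "real \<Rightarrow> nat \<Rightarrow> nat \<Rightarrow> nat \<Rightarrow> real" where
  "cell_start h N k i = real_of_int (int i * int N - int k) * h"

lemma measurable_shifted_cell [measurable]: "shifted_cell h N k \<in> borel \<rightarrow>\<^sub>M count_space UNIV"
  unfolding shifted_cell_def by measurable

lemma shifted_cell_less: "shifted_cell h N k x < nat (shifted_bucket h N k 1) + 1"
  unfolding shifted_cell_def by linarith

lemma shifted_cell_interval:
  assumes h: "0 < h" and N: "0 < N" and x: "0 \<le> x" "x \<le> 1"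
  shows "cell_start h N k (shifted_cell h N k x) \<le> x \<and> x \<le> cell_start h N k (shifted_cell h N k x) + real N * h"
proof -
  have "0 \<le> shifted_bucket h N k x" "shifted_bucket h N k x \<le> shifted_bucket h N k 1"
    using shifted_bucket_bounds(1)[OF h N x(1)] shifted_bucket_mono[OF h N x(2)] by auto
  then have "cell_start h N k (shifted_cell h N k x) = real_of_int (shifted_bucket h N k x * int N - int k) * h"
    by (simp add: shifted_cell_def cell_start_def)
  then show ?thesis using shifted_bucket_bounds(2,3)[OF h N x(1), of k] by simp
qed

lemma (in prob_space) sum_prob_shifted_bucket_ne_le:
  fixes f g :: "'a \<Rightarrow> real" and N :: nat
  assumes [measurable]: "f \<in> borel_measurable M" "g \<in> borel_measurable M"
    and int: "integrable M (\<lambda>x. \<bar>f x - g x\<bar>)" and h: "0 < h" and N: "0 < N"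
  shows "(\<Sum>k<N. prob {x\<in>space M. shifted_bucket h N k (f x) \<noteq> shifted_bucket h N k (g x)})
    \<le> expectation (\<lambda>x. \<bar>f x - g x\<bar>) / h + 1"
proof -
  define A where "A k = {x\<in>space M. shifted_bucket h N k (f x) \<noteq> shifted_bucket h N k (g x)}" for k
  have A_sets [measurable]: "A k \<in> sets M" for k unfolding A_def by measurable
  have "(\<Sum>k<N. prob (A k)) = expectation (\<lambda>x. \<Sum>k<N. indicator (A k) x)"
    by (subst Bochner_Integration.integral_sum) (auto intro!: integrable_ae_bounded)
  also have "\<dots> \<le> expectation (\<lambda>x. \<bar>f x - g x\<bar> / h + 1)"
  proof (rule integral_mono)
    fix x assume "x \<in> space M"
    then have "(\<Sum>k<N. indicator (A k) x) = real (card {k. k < N \<and>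
        (\<lfloor>f x / h\<rfloor> + int k) div int N \<noteq> (\<lfloor>g x / h\<rfloor> + int k) div int N})"
      by (simp add: indicator_def A_def shifted_bucket_def Int_def conj_commute)
    also have "\<dots> \<le> real (nat \<bar>\<lfloor>f x / h\<rfloor> - \<lfloor>g x / h\<rfloor>\<bar>)"
      using card_separating_shifts_le_abs[OF N] by (simp only: of_nat_le_iff)
    also have "\<dots> \<le> \<bar>f x - g x\<bar> / h + 1" using floor_divide_diff_le[OF h] by simp
    finally show "(\<Sum>k<N. indicator (A k) x) \<le> \<bar>f x - g x\<bar> / h + 1" .
  next
    show "integrable M (\<lambda>x. \<Sum>k<N. indicator (A k) x :: real)"
      by (intro Bochner_Integration.integrable_sum integrable_ae_bounded ae_bounded_indicator A_sets)
  qed (use int in auto)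
  also have "\<dots> = expectation (\<lambda>x. \<bar>f x - g x\<bar>) / h + 1"
    using int by (simp add: prob_space)
  finally show ?thesis unfolding A_def .
qed

section \<open>Conditional expectations of a [0,1]-valued variable\<close>

definition event_mean :: "'a measure \<Rightarrow> ('a \<Rightarrow> real) \<Rightarrow> 'a set \<Rightarrow> real" where
  "event_mean M Y E = (\<integral>x. indicator E x * Y x \<partial>M) / measure M E"

text \<open>On \<open>X\<close>, the ratio \<open>E[1\<^sub>X Y | F] / P(X | F)\<close> is a version of \<open>E[Y | F \<or> X]\<close>.  Where the
  denominator vanishes, so does the numerator (a.e.); the clipping to [0,1] only serves to make
  the quotient bounded everywhere.\<close>
definition event_cond_exp :: "'a measure \<Rightarrow> 'a measure \<Rightarrow> 'a set \<Rightarrow> ('a \<Rightarrow> real) \<Rightarrow> 'a \<Rightarrow> real" where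
  "event_cond_exp M F X Y x =
     max 0 (min 1 (real_cond_exp M F (\<lambda>x. indicator X x * Y x) x / real_cond_exp M F (indicator X) x))"

locale unit_rv = prob_space M for M :: "'a measure" +
  fixes Y :: "'a \<Rightarrow> real"
  assumes measurable_Y [measurable]: "Y \<in> borel_measurable M"
    and Y_unit: "\<And>x. x \<in> space M \<Longrightarrow> 0 \<le> Y x \<and> Y x \<le> 1"
begin

lemma ae_bounded_Y [intro]: "ae_bounded M Y"
  by (rule ae_bounded_unit_interval) (auto simp: Y_unit)

lemma integrable_Y: "integrable M Y"
  by (rule integrable_ae_bounded) blast

lemma cond_exp_unit:
  assumes "subalgebra M F"
  shows "AE x in M. 0 \<le> real_cond_exp M F Y x \<and> real_cond_exp M F Y x \<le> 1"
proof -
  interpret finite_measure_subalgebra M F by unfold_locales (fact assms)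
  have "AE x in M. 0 \<le> real_cond_exp M F Y x" by (rule real_cond_exp_pos) (auto simp: Y_unit)
  moreover have "AE x in M. real_cond_exp M F Y x \<le> 1"
    by (rule real_cond_exp_le_c) (auto simp: Y_unit integrable_Y)
  ultimately show ?thesis by auto
qed

lemma ae_bounded_cond_exp [intro]: "subalgebra M F \<Longrightarrow> ae_bounded M (real_cond_exp M F Y)"
  by (intro ae_bounded_unit_interval borel_measurable_cond_exp2 cond_exp_unit)

lemma integral_indicator_mult_Y:
  assumes "E \<in> sets M"
  shows "(\<integral>x. indicator E x * Y x \<partial>M) = event_mean M Y E * measure M E"
proof -
  have "0 \<le> (\<integral>x. indicator E x * Y x \<partial>M)"
    by (rule integral_nonneg_AE) (auto simp: Y_unit)
  moreover have "(\<integral>x. indicator E x * Y x \<partial>M) \<le> (\<integral>x. indicator E x \<partial>M)"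
    using assms
    by (intro integral_mono integrable_ae_bounded ae_bounded_mult ae_bounded_indicator ae_bounded_Y)
      (auto simp: Y_unit indicator_def)
  ultimately show ?thesis
    using assms by (cases "measure M E = 0") (auto simp: event_mean_def)
qed

lemma integral_mult_Y_diff_le:
  assumes f: "ae_bounded M f" and g: "ae_bounded M g"
  shows "(\<integral>x. f x * Y x \<partial>M) - (\<integral>x. g x * Y x \<partial>M) \<le> (\<integral>x. \<bar>f x - g x\<bar> \<partial>M)"
proof -
  have "(\<integral>x. f x * Y x \<partial>M) - (\<integral>x. g x * Y x \<partial>M) = (\<integral>x. (f x - g x) * Y x \<partial>M)"
    using f g by (subst Bochner_Integration.integral_diff[symmetric])
      (auto intro!: integrable_ae_bounded ae_bounded_mult simp: left_diff_distrib)
  also have "\<dots> \<le> (\<integral>x. \<bar>f x - g x\<bar> \<partial>M)"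
  proof (rule integral_mono)
    fix x assume "x \<in> space M"
    then have "\<bar>(f x - g x) * Y x\<bar> \<le> \<bar>f x - g x\<bar>"
      using Y_unit[of x] by (simp add: abs_mult mult_left_le)
    then show "(f x - g x) * Y x \<le> \<bar>f x - g x\<bar>" by linarith
  qed (intro integrable_ae_bounded ae_bounded_mult ae_bounded_abs ae_bounded_diff ae_bounded_Y f g)+
  finally show ?thesis .
qed

lemma cond_exp_residual_orthogonal:
  assumes "subalgebra M F" and [measurable]: "g \<in> borel_measurable F" and "ae_bounded M g"
  shows "(\<integral>x. (Y x - real_cond_exp M F Y x) * g x \<partial>M) = 0"
proof -
  interpret finite_measure_subalgebra M F by unfold_locales (fact assms)
  have "(\<integral>x. g x * real_cond_exp M F Y x \<partial>M) = (\<integral>x. g x * Y x \<partial>M)"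
    using assms by (intro real_cond_exp_intg integrable_ae_bounded) auto
  moreover have "(\<integral>x. (Y x - real_cond_exp M F Y x) * g x \<partial>M)
      = (\<integral>x. g x * Y x \<partial>M) - (\<integral>x. g x * real_cond_exp M F Y x \<partial>M)"
    using assms(1,3)
    by (subst Bochner_Integration.integral_diff[symmetric])
      (auto intro!: integrable_ae_bounded ae_bounded_mult simp: algebra_simps)
  ultimately show ?thesis by simp
qed

lemma cond_exp_residual_mult_le:
  assumes subalg: "subalgebra M F" and [measurable]: "h \<in> borel_measurable M" "f \<in> borel_measurable M"
    and h: "ae_bounded M h" and f: "\<And>x. 0 \<le> f x \<and> f x \<le> 1"
  shows "(\<integral>x. (Y x - real_cond_exp M F Y x) * h x * f x \<partial>M) \<le> (\<integral>x. \<bar>h x\<bar> \<partial>M)"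
proof (rule integral_mono_AE)
  show "AE x in M. (Y x - real_cond_exp M F Y x) * h x * f x \<le> \<bar>h x\<bar>"
    using cond_exp_unit[OF subalg] AE_space
  proof eventually_elim
    case (elim x)
    then have "\<bar>(Y x - real_cond_exp M F Y x) * f x\<bar> \<le> 1"
      using Y_unit[of x] f[of x] by (auto simp: abs_mult intro!: mult_le_one)
    then have "\<bar>(Y x - real_cond_exp M F Y x) * f x\<bar> * \<bar>h x\<bar> \<le> \<bar>h x\<bar>"
      by (simp add: mult_left_le_one_le)
    moreover have "(Y x - real_cond_exp M F Y x) * h x * f x \<le> \<bar>(Y x - real_cond_exp M F Y x) * f x\<bar> * \<bar>h x\<bar>"
      by (simp only: abs_mult[symmetric] mult.assoc mult.commute[of "f x"] abs_ge_self)
    ultimately show ?case by linarith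
  qed
qed (use subalg f in \<open>intro integrable_ae_bounded ae_bounded_mult ae_bounded_diff ae_bounded_abs h
      ae_bounded_Y ae_bounded_cond_exp ae_bounded_unit_interval; simp\<close>)+

lemma cond_exp_local_square:
  assumes "subalgebra M F" and E: "E \<in> sets F"
  defines "\<mu> \<equiv> real_cond_exp M F Y"
  shows "(\<integral>x. indicator E x * (\<mu> x - a)\<^sup>2 \<partial>M)
       = (\<integral>x. indicator E x * \<mu> x * Y x \<partial>M) - 2 * a * event_mean M Y E * measure M E + a\<^sup>2 * measure M E"
proof -
  interpret finite_measure_subalgebra M F by unfold_locales (fact assms)
  have [measurable]: "E \<in> sets F" "E \<in> sets M" using E subalg by (auto simp: subalgebra_def)
  have [measurable]: "\<mu> \<in> borel_measurable F" unfolding \<mu>_def by measurable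
  have b: "ae_bounded M \<mu>" unfolding \<mu>_def using assms(1) ..
  have "(\<integral>x. (indicator E x * \<mu> x) * \<mu> x \<partial>M) = (\<integral>x. (indicator E x * \<mu> x) * Y x \<partial>M)"
    unfolding \<mu>_def by (intro real_cond_exp_intg integrable_ae_bounded)
      (auto simp: \<mu>_def[symmetric] intro!: ae_bounded_mult b)
  moreover have "(\<integral>x. indicator E x * \<mu> x \<partial>M) = (\<integral>x. indicator E x * Y x \<partial>M)"
    unfolding \<mu>_def by (intro real_cond_exp_intg integrable_ae_bounded) (auto intro!: ae_bounded_mult)
  moreover have "(\<integral>x. indicator E x * (\<mu> x - a)\<^sup>2 \<partial>M)
      = (\<integral>x. (indicator E x * \<mu> x) * \<mu> x \<partial>M) - 2 * a * (\<integral>x. indicator E x * \<mu> x \<partial>M) + a\<^sup>2 * measure M E"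
  proof -
    have "(\<integral>x. indicator E x * (\<mu> x - a)\<^sup>2 \<partial>M)
        = (\<integral>x. (indicator E x * \<mu> x) * \<mu> x - 2 * a * (indicator E x * \<mu> x) + a\<^sup>2 * indicator E x \<partial>M)"
      by (intro Bochner_Integration.integral_cong) (auto simp: power2_eq_square algebra_simps)
    also have "\<dots> = (\<integral>x. (indicator E x * \<mu> x) * \<mu> x \<partial>M) - 2 * a * (\<integral>x. indicator E x * \<mu> x \<partial>M) + a\<^sup>2 * measure M E"
      using b by (simp add: integrable_ae_bounded ae_bounded_mult ae_bounded_indicator)
    finally show ?thesis .
  qed
  moreover have "(\<integral>x. indicator E x * Y x \<partial>M) = event_mean M Y E * measure M E"
    by (rule integral_indicator_mult_Y) fact
  ultimately show ?thesis by (simp add: mult.assoc)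
qed

lemma event_cond_exp_unit: "0 \<le> event_cond_exp M F X Y x \<and> event_cond_exp M F X Y x \<le> 1"
  unfolding event_cond_exp_def by auto

lemma borel_measurable_event_cond_exp [measurable]: "event_cond_exp M F X Y \<in> borel_measurable F"
  unfolding event_cond_exp_def by measurable

lemma ae_bounded_event_cond_exp [intro]:
  "subalgebra M F \<Longrightarrow> ae_bounded M (event_cond_exp M F X Y)"
  by (intro ae_bounded_unit_interval measurable_from_subalg[OF _ borel_measurable_event_cond_exp])
    (auto simp: event_cond_exp_unit)

lemma event_cond_exp_integral:
  assumes subalg: "subalgebra M F" and [measurable]: "X \<in> sets M" and C: "C \<in> sets F"
  shows "(\<integral>x. indicator C x * indicator X x * event_cond_exp M F X Y x \<partial>M)
       = (\<integral>x. indicator C x * indicator X x * Y x \<partial>M)"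
proof -
  interpret finite_measure_subalgebra M F by unfold_locales (fact subalg)
  have [measurable]: "C \<in> sets F" "C \<in> sets M" using C subalg by (auto simp: subalgebra_def)
  define f where "f = event_cond_exp M F X Y"
  define p where "p = real_cond_exp M F (indicator X)"
  define q where "q = real_cond_exp M F (\<lambda>x. indicator X x * Y x)"
  have [measurable]: "f \<in> borel_measurable F" unfolding f_def by measurable
  have [measurable]: "f \<in> borel_measurable M" by (rule measurable_from_subalg[OF subalg]) measurable
  have [measurable]: "p \<in> borel_measurable M" "q \<in> borel_measurable M" unfolding p_def q_def by measurable
  have f_unit: "0 \<le> f x \<and> f x \<le> 1" for x unfolding f_def by (rule event_cond_exp_unit)
  have "AE x in M. 0 \<le> q x" unfolding q_def by (rule real_cond_exp_pos) (auto simp: Y_unit)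
  moreover have "AE x in M. q x \<le> p x" unfolding q_def p_def
    by (rule real_cond_exp_mono)
      (auto intro!: integrable_ae_bounded ae_bounded_mult ae_bounded_indicator ae_bounded_Y
        simp: Y_unit split: split_indicator)
  ultimately have "AE x in M. (indicator C x * f x) * p x = indicator C x * q x"
  proof eventually_elim
    case (elim x)
    show ?case
    proof (cases "p x = 0")
      case False
      with elim have "f x = q x / p x"
        unfolding f_def event_cond_exp_def p_def[symmetric] q_def[symmetric] by (auto simp: divide_le_eq_1)
      with False show ?thesis by simp
    qed (use elim in simp)
  qed
  then have "(\<integral>x. (indicator C x * f x) * p x \<partial>M) = (\<integral>x. indicator C x * q x \<partial>M)"
    by (intro integral_cong_AE) auto
  moreover have "(\<integral>x. (indicator C x * f x) * p x \<partial>M) = (\<integral>x. (indicator C x * f x) * indicator X x \<partial>M)"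
    unfolding p_def
    by (rule real_cond_exp_intg(2)[where f="\<lambda>x. indicator C x * f x"])
      (auto intro!: integrable_ae_bounded ae_bounded_mult ae_bounded_unit_interval[of f] simp: f_unit)
  ultimately have "(\<integral>x. indicator C x * f x * indicator X x \<partial>M) = (\<integral>x. indicator C x * q x \<partial>M)"
    by simp
  also have "\<dots> = (\<integral>x. indicator C x * (indicator X x * Y x) \<partial>M)"
    unfolding q_def by (rule real_cond_exp_intg) (auto intro!: integrable_ae_bounded ae_bounded_mult)
  finally show ?thesis by (simp add: f_def mult_ac)
qed

lemma cond_exp_adjoin_event_on_event:
  assumes subalg: "subalgebra M F" and E [measurable]: "E \<in> sets M"
  shows "AE x in M. x \<in> E \<longrightarrow> real_cond_exp M (adjoin_event F E) Y x = event_cond_exp M F E Y x"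
proof -
  interpret F': finite_measure_subalgebra M "adjoin_event F E"
    by unfold_locales (rule subalgebra_adjoin_event[OF assms])
  let ?Ec = "space M - E"
  define V where "V x = indicator E x * event_cond_exp M F E Y x + indicator ?Ec x * event_cond_exp M F ?Ec Y x"
    for x
  have "space (adjoin_event F E) = space M" using F'.subalg by (simp add: subalgebra_def)
  then have EF': "E \<in> sets (adjoin_event F E)" "?Ec \<in> sets (adjoin_event F E)"
    using event_in_adjoin_event[OF assms] sets.compl_sets[OF event_in_adjoin_event[OF assms]] by auto
  have [measurable]: "V \<in> borel_measurable (adjoin_event F E)"
    unfolding V_def using EF' subalgebra_adjoin_event_base[OF assms]
    by (intro borel_measurable_add borel_measurable_times borel_measurable_indicator
        measurable_from_subalg[OF _ borel_measurable_event_cond_exp]) auto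
  have V_bounded: "ae_bounded M V" unfolding V_def using subalg by (intro ae_bounded_add ae_bounded_mult) auto
  have "AE x in M. real_cond_exp M (adjoin_event F E) Y x = V x"
  proof (rule F'.real_cond_exp_charact)
    fix A assume "A \<in> sets (adjoin_event F E)"
    moreover have "sigma_algebra (space M) (sets F)"
      using subalg by (metis sets.sigma_algebra_axioms subalgebra_def)
    ultimately obtain C D where CD: "C \<in> sets F" "D \<in> sets F" "A = (C \<inter> E) \<union> (D - E)"
      unfolding sets_adjoin_event[OF assms] using sigma_sets_insert_split sets.sets_into_space[OF E]
      by metis
    have [measurable]: "C \<in> sets M" "D \<in> sets M" using CD subalg by (auto simp: subalgebra_def)
    have A: "indicator A x = (indicator C x * indicator E x + indicator D x * indicator ?Ec x :: real)"
      if "x \<in> space M" for x using that CD by (auto simp: indicator_def)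
    have "(\<integral>x\<in>A. Y x \<partial>M)
        = (\<integral>x. indicator C x * indicator E x * Y x \<partial>M) + (\<integral>x. indicator D x * indicator ?Ec x * Y x \<partial>M)"
      unfolding set_lebesgue_integral_def
      by (subst Bochner_Integration.integral_add[symmetric])
        (auto intro!: Bochner_Integration.integral_cong integrable_ae_bounded ae_bounded_mult simp: A algebra_simps)
    also have "\<dots> = (\<integral>x. indicator C x * indicator E x * event_cond_exp M F E Y x \<partial>M)
        + (\<integral>x. indicator D x * indicator ?Ec x * event_cond_exp M F ?Ec Y x \<partial>M)"
      using CD subalg by (simp add: event_cond_exp_integral)
    also have "\<dots> = (\<integral>x\<in>A. V x \<partial>M)"
      unfolding set_lebesgue_integral_def V_def using subalg
      by (subst Bochner_Integration.integral_add[symmetric])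
        (auto intro!: Bochner_Integration.integral_cong integrable_ae_bounded ae_bounded_mult
          simp: A split: split_indicator)
    finally show "(\<integral>x\<in>A. Y x \<partial>M) = (\<integral>x\<in>A. V x \<partial>M)" .
  qed (auto simp: integrable_Y V_bounded intro!: integrable_ae_bounded)
  then show ?thesis by eventually_elim (auto simp: V_def)
qed

lemma adjoin_event_local_variance_le:
  assumes subalg: "subalgebra M F" and E [measurable]: "E \<in> sets M" and G: "G \<in> sets F"
  defines "Z \<equiv> real_cond_exp M (adjoin_event F E) Y" and "\<mu> \<equiv> real_cond_exp M F Y"
    and "c \<equiv> event_mean M Y E"
  shows "(\<integral>x. indicator E x * (Z x - c)\<^sup>2 \<partial>M)
     \<le> (\<integral>x. \<bar>indicator E x - indicator G x\<bar> \<partial>M) + (\<integral>x. indicator E x * \<mu> x * Y x \<partial>M)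
        - c\<^sup>2 * measure M E"
proof -
  define f where "f = event_cond_exp M F E Y"
  have subalg': "subalgebra M (adjoin_event F E)" by (rule subalgebra_adjoin_event[OF subalg E])
  have [measurable]: "G \<in> sets F" "G \<in> sets M" using G subalg by (auto simp: subalgebra_def)
  have [measurable]: "\<mu> \<in> borel_measurable F" "Z \<in> borel_measurable M" "\<mu> \<in> borel_measurable M"
    "f \<in> borel_measurable F" unfolding \<mu>_def Z_def f_def by measurable
  then have [measurable]: "f \<in> borel_measurable M" using measurable_from_subalg[OF subalg] by blast
  have [measurable]: "\<mu> \<in> borel_measurable (adjoin_event F E)" "E \<in> sets (adjoin_event F E)"
    using measurable_from_subalg[OF subalgebra_adjoin_event_base[OF subalg E] \<open>\<mu> \<in> borel_measurable F\<close>]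
      event_in_adjoin_event[OF subalg E] by auto
  have bounded [intro]: "ae_bounded M Z" "ae_bounded M \<mu>" "ae_bounded M f"
    unfolding Z_def \<mu>_def f_def using subalg subalg' by auto
  have square: "(\<integral>x. indicator E x * (Z x - c)\<^sup>2 \<partial>M)
      = (\<integral>x. indicator E x * Z x * Y x \<partial>M) - c\<^sup>2 * measure M E"
    using cond_exp_local_square[OF subalg' event_in_adjoin_event[OF subalg E], of c]
    unfolding Z_def[symmetric] c_def[symmetric] by (simp add: power2_eq_square)
  txt \<open>On \<open>E\<close> the variable \<open>Z\<close> agrees with the \<open>F\<close>-measurable \<open>f\<close>, which is orthogonal to
    \<open>Y - \<mu>\<close> when cut off at \<open>G \<in> F\<close> instead of \<open>E\<close>; only \<open>E \<triangle> G\<close> contributes an error.\<close>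
  have "AE x in M. indicator E x * Z x * Y x
      = (Y x - \<mu> x) * (indicator E x - indicator G x) * f x + (Y x - \<mu> x) * (indicator G x * f x)
        + indicator E x * \<mu> x * Y x - (Y x - Z x) * (\<mu> x * indicator E x)"
    using cond_exp_adjoin_event_on_event[OF subalg E]
  proof eventually_elim
    case (elim x)
    then show ?case
      by (cases "x \<in> E") (simp_all add: Z_def f_def algebra_simps)
  qed
  then have "(\<integral>x. indicator E x * Z x * Y x \<partial>M)
      = (\<integral>x. (Y x - \<mu> x) * (indicator E x - indicator G x) * f x + (Y x - \<mu> x) * (indicator G x * f x)
        + indicator E x * \<mu> x * Y x - (Y x - Z x) * (\<mu> x * indicator E x) \<partial>M)"
    by (intro integral_cong_AE) auto
  also have "\<dots> = (\<integral>x. (Y x - \<mu> x) * (indicator E x - indicator G x) * f x \<partial>M)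
        + (\<integral>x. (Y x - \<mu> x) * (indicator G x * f x) \<partial>M)
        + (\<integral>x. indicator E x * \<mu> x * Y x \<partial>M) - (\<integral>x. (Y x - Z x) * (\<mu> x * indicator E x) \<partial>M)"
  proof -
    have "integrable M (\<lambda>x. (Y x - \<mu> x) * (indicator E x - indicator G x) * f x)"
      "integrable M (\<lambda>x. (Y x - \<mu> x) * (indicator G x * f x))"
      "integrable M (\<lambda>x. indicator E x * \<mu> x * Y x)"
      "integrable M (\<lambda>x. (Y x - Z x) * (\<mu> x * indicator E x))"
      by (intro integrable_ae_bounded ae_bounded_mult ae_bounded_diff ae_bounded_indicator bounded
          ae_bounded_Y; simp)+
    then show ?thesis by simp
  qed
  also have "(\<integral>x. (Y x - \<mu> x) * (indicator G x * f x) \<partial>M) = 0"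
    unfolding \<mu>_def using subalg by (intro cond_exp_residual_orthogonal ae_bounded_mult ae_bounded_indicator bounded) auto
  also have "(\<integral>x. (Y x - Z x) * (\<mu> x * indicator E x) \<partial>M) = 0"
    unfolding Z_def using subalg' by (intro cond_exp_residual_orthogonal ae_bounded_mult ae_bounded_indicator bounded) auto
  also have "(\<integral>x. (Y x - \<mu> x) * (indicator E x - indicator G x) * f x \<partial>M)
      \<le> (\<integral>x. \<bar>indicator E x - indicator G x\<bar> \<partial>M)"
    unfolding \<mu>_def using subalg measurable_from_subalg[OF subalg \<open>f \<in> borel_measurable F\<close>]
      event_cond_exp_unit[of F E] unfolding f_def[symmetric]
    by (intro cond_exp_residual_mult_le ae_bounded_diff ae_bounded_indicator) auto
  finally show ?thesis using square by linarith
qed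

lemma cond_exp_local_variance_le_width:
  assumes subalg: "subalgebra M F" and E: "E \<in> sets F"
    and width: "AE x in M. x \<in> E \<longrightarrow> a \<le> real_cond_exp M F Y x \<and> real_cond_exp M F Y x \<le> a + w"
  shows "(\<integral>x. indicator E x * real_cond_exp M F Y x * Y x \<partial>M) - (event_mean M Y E)\<^sup>2 * measure M E
    \<le> w\<^sup>2 * measure M E"
proof -
  define \<mu> where "\<mu> = real_cond_exp M F Y"
  define c where "c = event_mean M Y E"
  have [measurable]: "E \<in> sets M" using E subalg by (auto simp: subalgebra_def)
  have "(\<integral>x. indicator E x * (\<mu> x - a)\<^sup>2 \<partial>M) \<le> (\<integral>x. w\<^sup>2 * indicator E x \<partial>M)"
  proof (rule integral_mono_AE)
    show "AE x in M. indicator E x * (\<mu> x - a)\<^sup>2 \<le> w\<^sup>2 * indicator E x"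
      using width unfolding \<mu>_def[symmetric]
      by eventually_elim (auto simp: abs_le_square_iff[symmetric] split: split_indicator)
  qed (auto simp: \<mu>_def intro!: integrable_ae_bounded ae_bounded_mult ae_bounded_power2 ae_bounded_diff
      ae_bounded_indicator ae_bounded_cond_exp subalg)
  moreover have "(\<integral>x. indicator E x * (\<mu> x - a)\<^sup>2 \<partial>M)
      = (\<integral>x. indicator E x * \<mu> x * Y x \<partial>M) - 2 * a * c * measure M E + a\<^sup>2 * measure M E"
    unfolding \<mu>_def c_def by (rule cond_exp_local_square[OF subalg E])
  moreover have "0 \<le> (a - c)\<^sup>2 * measure M E" by simp
  ultimately show ?thesis
    unfolding \<mu>_def[symmetric] c_def[symmetric] by (simp add: power2_eq_square algebra_simps)
qed

lemma partition_local_variance_le: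
  assumes subF: "subalgebra M F" and subH: "subalgebra M H"
    and E: "\<And>j. j < n \<Longrightarrow> E j \<in> sets H" and G: "\<And>j. j < n \<Longrightarrow> G j \<in> sets F"
    and partition: "\<And>x. x \<in> space M \<Longrightarrow> (\<Sum>j<n. indicator (E j) x) = (1::real)"
    and width: "\<And>j. j < n \<Longrightarrow>
      AE x in M. x \<in> E j \<longrightarrow> lo j \<le> real_cond_exp M H Y x \<and> real_cond_exp M H Y x \<le> lo j + w"
  shows "(\<Sum>j<n. \<integral>x. indicator (E j) x *
            (real_cond_exp M (adjoin_event F (E j)) Y x - event_mean M Y (E j))\<^sup>2 \<partial>M)
    \<le> (\<Sum>j<n. \<integral>x. \<bar>indicator (E j) x - indicator (G j) x\<bar> \<partial>M)
       + (\<integral>x. \<bar>real_cond_exp M F Y x - real_cond_exp M H Y x\<bar> \<partial>M) + w\<^sup>2"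
proof -
  define \<mu>F where "\<mu>F = real_cond_exp M F Y"
  define \<mu>H where "\<mu>H = real_cond_exp M H Y"
  have EM: "E j \<in> sets M" if "j < n" for j using E[OF that] subH by (auto simp: subalgebra_def)
  have bounded: "ae_bounded M \<mu>F" "ae_bounded M \<mu>H"
    unfolding \<mu>F_def \<mu>H_def using subF subH by (auto intro: ae_bounded_cond_exp)
  have "(\<Sum>j<n. \<integral>x. indicator (E j) x *
            (real_cond_exp M (adjoin_event F (E j)) Y x - event_mean M Y (E j))\<^sup>2 \<partial>M)
    \<le> (\<Sum>j<n. (\<integral>x. \<bar>indicator (E j) x - indicator (G j) x\<bar> \<partial>M)
        + (\<integral>x. indicator (E j) x * (\<mu>F x * Y x) \<partial>M) - (\<integral>x. indicator (E j) x * (\<mu>H x * Y x) \<partial>M)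
        + w\<^sup>2 * measure M (E j))"
  proof (rule sum_mono)
    fix j assume "j \<in> {..<n}"
    then have j: "j < n" by simp
    show "(\<integral>x. indicator (E j) x * (real_cond_exp M (adjoin_event F (E j)) Y x - event_mean M Y (E j))\<^sup>2 \<partial>M)
      \<le> (\<integral>x. \<bar>indicator (E j) x - indicator (G j) x\<bar> \<partial>M)
        + (\<integral>x. indicator (E j) x * (\<mu>F x * Y x) \<partial>M) - (\<integral>x. indicator (E j) x * (\<mu>H x * Y x) \<partial>M)
        + w\<^sup>2 * measure M (E j)"
      using adjoin_event_local_variance_le[OF subF EM[OF j] G[OF j]]
        cond_exp_local_variance_le_width[OF subH E[OF j] width[OF j]]
      unfolding \<mu>F_def \<mu>H_def by (simp add: mult.assoc)
  qed
  also have "\<dots> = (\<Sum>j<n. \<integral>x. \<bar>indicator (E j) x - indicator (G j) x\<bar> \<partial>M)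
      + (\<integral>x. \<mu>F x * Y x \<partial>M) - (\<integral>x. \<mu>H x * Y x \<partial>M) + w\<^sup>2"
  proof -
    have "(\<Sum>j<n. \<integral>x. indicator (E j) x * (\<mu> x * Y x) \<partial>M) = (\<integral>x. \<mu> x * Y x \<partial>M)"
      if "ae_bounded M \<mu>" for \<mu>
      using EM partition that by (intro integral_indicator_partition integrable_ae_bounded) auto
    moreover have "(\<Sum>j<n. measure M (E j)) = 1"
      using integral_indicator_partition[of n E M "\<lambda>_. 1"] EM partition by (simp add: prob_space)
    ultimately show ?thesis
      using bounded by (simp add: sum.distrib sum_subtractf sum_distrib_left[symmetric])
  qed
  also have "\<dots> \<le> (\<Sum>j<n. \<integral>x. \<bar>indicator (E j) x - indicator (G j) x\<bar> \<partial>M)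
      + (\<integral>x. \<bar>\<mu>F x - \<mu>H x\<bar> \<partial>M) + w\<^sup>2"
    using integral_mult_Y_diff_le[OF bounded] by linarith
  finally show ?thesis unfolding \<mu>F_def \<mu>H_def .
qed

end

lemma (in prob_space) expectation_abs_le_sqrt:
  fixes f :: "'a \<Rightarrow> real"
  assumes [measurable]: "f \<in> borel_measurable M" and sq: "integrable M (\<lambda>x. (f x)\<^sup>2)"
  shows "expectation (\<lambda>x. \<bar>f x\<bar>) \<le> sqrt (expectation (\<lambda>x. (f x)\<^sup>2))"
proof (rule real_le_rsqrt)
  have "integrable M (\<lambda>x. \<bar>f x\<bar>)" using square_integrable_imp_integrable[OF assms] by simp
  then have "variance (\<lambda>x. \<bar>f x\<bar>) = expectation (\<lambda>x. (f x)\<^sup>2) - (expectation (\<lambda>x. \<bar>f x\<bar>))\<^sup>2"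
    using sq by (subst variance_eq) auto
  then show "(expectation (\<lambda>x. \<bar>f x\<bar>))\<^sup>2 \<le> expectation (\<lambda>x. (f x)\<^sup>2)"
    using variance_positive[of "\<lambda>x. \<bar>f x\<bar>"] by linarith
qed

lemma le_of_forall_bucket_width:
  fixes T \<delta> D \<epsilon> :: real
  assumes \<epsilon>: "0 \<le> \<epsilon>" "\<epsilon> \<le> 1" and D: "0 \<le> D" "D \<le> sqrt \<epsilon>"
    and T: "\<And>w. 0 < w \<Longrightarrow> T \<le> \<delta> + D + w\<^sup>2 + 2 * D / w"
  shows "T \<le> 6 * \<epsilon> powr (1/3) + \<delta>"
proof (cases "\<epsilon> = 0")
  case True
  then have "D = 0" using D by simp
  have "T \<le> \<delta>"
  proof (rule field_le_epsilon)
    fix e :: real assume "0 < e"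
    then show "T \<le> \<delta> + e" using T[of "sqrt e"] \<open>D = 0\<close> by simp
  qed
  then show ?thesis using True by simp
next
  case False
  txt \<open>The choice \<open>w = \<epsilon>^(1/6)\<close> balances \<open>w\<^sup>2\<close> against \<open>D / w \<le> \<epsilon>^(1/2) / w\<close>.\<close>
  define u where "u = \<epsilon> powr (1/6)"
  have u: "0 < u" "u \<le> 1" using \<epsilon> False by (auto simp: u_def powr_le1)
  have u_pow: "u ^ k = \<epsilon> powr (real k / 6)" for k
    unfolding u_def using \<epsilon> False by (simp add: powr_realpow[symmetric] powr_powr)
  have "D \<le> u ^ 3" using D u_pow[of 3] \<epsilon> by (simp add: powr_half_sqrt)
  moreover have "u ^ 3 \<le> u\<^sup>2" using u by (simp add: power_decreasing)
  moreover have "2 * D / u \<le> 2 * u\<^sup>2"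
    using \<open>D \<le> u ^ 3\<close> u by (simp add: divide_le_eq power2_eq_square power3_eq_cube mult.commute)
  ultimately have "T \<le> \<delta> + 4 * u\<^sup>2" using T[OF u(1)] by linarith
  also have "u\<^sup>2 = \<epsilon> powr (1/3)" using u_pow[of 2] by simp
  finally show ?thesis using powr_ge_zero[of \<epsilon> "1/3"] by linarith
qed

lemma sets_sig_gen_preimgs:
  assumes "f \<in> M \<rightarrow>\<^sub>M N"
  shows "sets (sig_gen M (preimgs M f N)) = preimgs M f N"
  unfolding sig_gen_def preimgs_def using assms
  by (subst sets_vimage_algebra2[unfolded vimage_algebra_def]) (auto simp: measurable_def)

lemma subalgebra_sig_gen:
  assumes "G \<subseteq> sets M"
  shows "subalgebra M (sig_gen M G)"
proof -
  have "G \<subseteq> Pow (space M)" using assms sets.sets_into_space by auto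
  then show ?thesis unfolding subalgebra_def sig_gen_def using assms by (auto simp: sets.sigma_sets_subset)
qed

locale information_structure =
  fixes M :: "'a measure" and Ms :: "'s measure" and Mt :: "'t measure"
    and sg :: "'a \<Rightarrow> 's" and tu :: "'a \<Rightarrow> 't" and Y :: "'a \<Rightarrow> real"
  assumes info_structure: "info_structure M Ms Mt sg tu Y"

sublocale information_structure \<subseteq> unit_rv M Y
  using info_structure unfolding info_structure_def unit_rv_def unit_rv_axioms_def by blast

context information_structure
begin

abbreviation "Fsg \<equiv> sig_gen M (preimgs M sg Ms)"
abbreviation "Ftu \<equiv> sig_gen M (preimgs M tu Mt)"

lemma measurable_sg [measurable]: "sg \<in> M \<rightarrow>\<^sub>M Ms"
  and measurable_tu [measurable]: "tu \<in> M \<rightarrow>\<^sub>M Mt"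
  using info_structure by (auto simp: info_structure_def)

lemma subalgebra_Fsg: "subalgebra M Fsg"
  and subalgebra_Ftu: "subalgebra M Ftu"
  by (intro subalgebra_sig_gen preimgs_subset_sets measurable_sg measurable_tu)+

lemma mu_sT_eq_adjoin_event:
  "mu_sT M Ms sg tu Y T = real_cond_exp M (adjoin_event Fsg (tu -` T \<inter> space M)) Y"
  unfolding mu_sT_def adjoin_event_def sets_sig_gen_preimgs[OF measurable_sg]
  by (simp add: sig_gen_def space_measure_of_conv)

lemma mu_sT_space_eq_mu_s: "mu_sT M Mt tu sg Y (space Ms) = mu_s M Mt tu Y"
proof -
  have "sg -` space Ms \<inter> space M = tu -` space Mt \<inter> space M"
    using measurable_sg measurable_tu by (auto simp: measurable_def)
  then have "sg -` space Ms \<inter> space M \<in> preimgs M tu Mt" unfolding preimgs_def by blast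
  then show ?thesis unfolding mu_sT_def mu_s_def by (simp add: insert_absorb)
qed

lemma approx_rect_subst_tu_partition:
  fixes n :: nat
  assumes subst: "approx_rect_subst M Ms Mt sg tu Y \<delta>" and n: "0 < n"
    and E: "\<And>j. j < n \<Longrightarrow> E j \<in> preimgs M tu Mt"
    and disj: "\<And>i j. i < n \<Longrightarrow> j < n \<Longrightarrow> i \<noteq> j \<Longrightarrow> E i \<inter> E j = {}"
    and cover: "(\<Union>j<n. E j) = space M"
  shows "(\<integral>\<omega>. (mu_st M Ms Mt sg tu Y \<omega> - mu_s M Mt tu Y \<omega>)\<^sup>2 \<partial>M)
    \<le> (\<Sum>j<n. \<integral>x. indicator (E j) x *
          (real_cond_exp M (adjoin_event Fsg (E j)) Y x - event_mean M Y (E j))\<^sup>2 \<partial>M) + \<delta>"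
proof -
  obtain B where B: "\<And>j. B j \<in> sets Mt" "disjoint_family B" "(\<Union>j. B j) = space Mt"
    "\<And>j. j < n \<Longrightarrow> tu -` B j \<inter> space M = E j" "\<And>j. n \<le> j \<Longrightarrow> B j = {}"
    using preimage_partition_lift[OF measurable_tu n, of E] E disj cover by blast
  have rect: "rect_event M sg tu (space Ms) (B j) = (if j < n then E j else {})" for j
    using B(4)[of j] B(5)[of j] measurable_sg by (auto simp: rect_event_def measurable_def)
  have "(\<integral>\<omega>. (mu_st M Ms Mt sg tu Y \<omega> - mu_s M Mt tu Y \<omega>)\<^sup>2 \<partial>M)
      = (\<Sum>j<n. \<integral>\<omega>. indicator (E j) \<omega> * (mu_st M Ms Mt sg tu Y \<omega> - mu_s M Mt tu Y \<omega>)\<^sup>2 \<partial>M)"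
  proof (rule integral_indicator_partition[symmetric])
    show "E j \<in> sets M" if "j < n" for j using E[OF that] preimgs_subset_sets[OF measurable_tu] by blast
    show "(\<Sum>j<n. indicator (E j) x) = (1::real)" if "x \<in> space M" for x
      using that cover by (intro sum_indicator_disjoint_eq_1) (simp_all add: disj)
    have "subalgebra M (sig_gen M (preimgs M sg Ms \<union> preimgs M tu Mt))"
      by (intro subalgebra_sig_gen Un_least preimgs_subset_sets measurable_sg measurable_tu)
    then show "integrable M (\<lambda>\<omega>. (mu_st M Ms Mt sg tu Y \<omega> - mu_s M Mt tu Y \<omega>)\<^sup>2)"
      unfolding mu_st_def mu_s_def using subalgebra_Ftu
      by (intro integrable_ae_bounded ae_bounded_power2 ae_bounded_diff ae_bounded_cond_exp)
  qed
  also have "\<dots> = (\<Sum>j. \<integral>\<omega>. indicator (rect_event M sg tu (space Ms) (B j)) \<omega> *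
      (mu_st M Ms Mt sg tu Y \<omega> - mu_sT M Mt tu sg Y (space Ms) \<omega>)\<^sup>2 \<partial>M)"
    by (subst suminf_finite[of "{..<n}"]) (simp_all add: rect mu_sT_space_eq_mu_s)
  also have "\<dots> \<le> (\<Sum>j. \<integral>\<omega>. indicator (rect_event M sg tu (space Ms) (B j)) \<omega> *
      (mu_sT M Ms sg tu Y (B j) \<omega> - mu_ST M sg tu Y (space Ms) (B j))\<^sup>2 \<partial>M) + \<delta>"
  proof -
    have "(\<forall>j. space Ms \<in> sets Ms \<and> B j \<in> sets Mt) \<and> disjoint_family (\<lambda>j. space Ms \<times> B j)
        \<and> (\<Union>j. space Ms \<times> B j) = space Ms \<times> space Mt"
      using B by (auto simp: disjoint_family_on_def)
    then show ?thesis by (rule subst[unfolded approx_rect_subst_def, rule_format])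
  qed
  also have "(\<Sum>j. \<integral>\<omega>. indicator (rect_event M sg tu (space Ms) (B j)) \<omega> *
      (mu_sT M Ms sg tu Y (B j) \<omega> - mu_ST M sg tu Y (space Ms) (B j))\<^sup>2 \<partial>M)
      = (\<Sum>j<n. \<integral>x. indicator (E j) x *
          (real_cond_exp M (adjoin_event Fsg (E j)) Y x - event_mean M Y (E j))\<^sup>2 \<partial>M)"
  proof -
    have "mu_sT M Ms sg tu Y (B j) = real_cond_exp M (adjoin_event Fsg (E j)) Y" if "j < n" for j
      unfolding mu_sT_eq_adjoin_event B(4)[OF that] ..
    moreover have "mu_ST M sg tu Y (space Ms) (B j) = event_mean M Y (E j)" if "j < n" for j
      using that by (simp add: mu_ST_def event_mean_def rect)
    ultimately show ?thesis by (subst suminf_finite[of "{..<n}"]) (simp_all add: rect)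
  qed
  finally show ?thesis .
qed

lemma approx_rect_subst_bucket_bound:
  fixes idx :: "real \<Rightarrow> nat" and lo :: "nat \<Rightarrow> real" and n :: nat
  assumes subst: "approx_rect_subst M Ms Mt sg tu Y \<delta>"
    and idx_measurable [measurable]: "idx \<in> borel \<rightarrow>\<^sub>M count_space UNIV"
    and idx_less: "\<And>x. idx x < n"
    and lo: "\<And>x. 0 \<le> x \<Longrightarrow> x \<le> 1 \<Longrightarrow> lo (idx x) \<le> x \<and> x \<le> lo (idx x) + w"
  shows "(\<integral>\<omega>. (mu_st M Ms Mt sg tu Y \<omega> - mu_s M Mt tu Y \<omega>)\<^sup>2 \<partial>M)
    \<le> \<delta> + 2 * measure M {\<omega>\<in>space M. idx (mu_s M Mt tu Y \<omega>) \<noteq> idx (mu_s M Ms sg Y \<omega>)}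
      + (\<integral>\<omega>. \<bar>mu_s M Ms sg Y \<omega> - mu_s M Mt tu Y \<omega>\<bar> \<partial>M) + w\<^sup>2"
proof -
  define \<mu>s where "\<mu>s = mu_s M Ms sg Y"
  define \<mu>t where "\<mu>t = mu_s M Mt tu Y"
  have [measurable]: "\<mu>s \<in> borel_measurable Fsg" "\<mu>t \<in> borel_measurable Ftu"
    "\<mu>s \<in> borel_measurable M" "\<mu>t \<in> borel_measurable M"
    unfolding \<mu>s_def \<mu>t_def mu_s_def by measurable
  define E where "E j = {\<omega>\<in>space M. idx (\<mu>t \<omega>) = j}" for j
  define G where "G j = {\<omega>\<in>space M. idx (\<mu>s \<omega>) = j}" for j
  have E_Ftu: "E j \<in> sets Ftu" for j
    using measurable_sets[of "\<lambda>\<omega>. idx (\<mu>t \<omega>)" Ftu "count_space UNIV" "{j}"] subalgebra_Ftu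
    by (auto simp: E_def vimage_def Int_def subalgebra_def conj_commute)
  have G_Fsg: "G j \<in> sets Fsg" for j
    using measurable_sets[of "\<lambda>\<omega>. idx (\<mu>s \<omega>)" Fsg "count_space UNIV" "{j}"] subalgebra_Fsg
    by (auto simp: G_def vimage_def Int_def subalgebra_def conj_commute)
  have n: "0 < n" using idx_less[of 0] by simp
  have disj: "E i \<inter> E j = {}" if "i \<noteq> j" for i j using that by (auto simp: E_def)
  have cover: "(\<Union>j<n. E j) = space M" using idx_less by (auto simp: E_def)
  have "(\<integral>\<omega>. (mu_st M Ms Mt sg tu Y \<omega> - \<mu>t \<omega>)\<^sup>2 \<partial>M)
      \<le> (\<Sum>j<n. \<integral>x. indicator (E j) x *
          (real_cond_exp M (adjoin_event Fsg (E j)) Y x - event_mean M Y (E j))\<^sup>2 \<partial>M) + \<delta>"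
    unfolding \<mu>t_def using E_Ftu sets_sig_gen_preimgs[OF measurable_tu]
    by (intro approx_rect_subst_tu_partition subst n disj cover) auto
  also have "\<dots> \<le> (\<Sum>j<n. \<integral>x. \<bar>indicator (E j) x - indicator (G j) x\<bar> \<partial>M)
      + (\<integral>x. \<bar>\<mu>s x - \<mu>t x\<bar> \<partial>M) + w\<^sup>2 + \<delta>"
  proof -
    have width: "AE x in M. x \<in> E j \<longrightarrow> lo j \<le> real_cond_exp M Ftu Y x \<and> real_cond_exp M Ftu Y x \<le> lo j + w"
      for j
      using cond_exp_unit[OF subalgebra_Ftu]
      by eventually_elim (auto simp: E_def \<mu>t_def mu_s_def dest: lo)
    have "(\<Sum>j<n. \<integral>x. indicator (E j) x *
          (real_cond_exp M (adjoin_event Fsg (E j)) Y x - event_mean M Y (E j))\<^sup>2 \<partial>M)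
      \<le> (\<Sum>j<n. \<integral>x. \<bar>indicator (E j) x - indicator (G j) x\<bar> \<partial>M)
        + (\<integral>x. \<bar>real_cond_exp M Fsg Y x - real_cond_exp M Ftu Y x\<bar> \<partial>M) + w\<^sup>2"
      by (rule partition_local_variance_le[OF subalgebra_Fsg subalgebra_Ftu E_Ftu G_Fsg _ width])
        (use sum_indicator_disjoint_eq_1[of n E] disj cover in auto)
    then show ?thesis unfolding \<mu>s_def \<mu>t_def mu_s_def by simp
  qed
  also have "(\<Sum>j<n. \<integral>x. \<bar>indicator (E j) x - indicator (G j) x\<bar> \<partial>M)
      = 2 * measure M {\<omega>\<in>space M. idx (\<mu>t \<omega>) \<noteq> idx (\<mu>s \<omega>)}"
  proof -
    have "(\<lambda>\<omega>. idx (\<mu>t \<omega>)) \<in> M \<rightarrow>\<^sub>M count_space UNIV" "(\<lambda>\<omega>. idx (\<mu>s \<omega>)) \<in> M \<rightarrow>\<^sub>M count_space UNIV"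
      by measurable
    then show ?thesis unfolding E_def G_def by (rule sum_integral_abs_indicator_level_sets) (rule idx_less)+
  qed
  finally show ?thesis unfolding \<mu>s_def \<mu>t_def by linarith
qed

lemma approx_rect_subst_shift_average:
  fixes N :: nat
  assumes subst: "approx_rect_subst M Ms Mt sg tu Y \<delta>" and w: "0 < w" and N: "0 < N"
  shows "(\<integral>\<omega>. (mu_st M Ms Mt sg tu Y \<omega> - mu_s M Mt tu Y \<omega>)\<^sup>2 \<partial>M)
    \<le> \<delta> + (\<integral>\<omega>. \<bar>mu_s M Ms sg Y \<omega> - mu_s M Mt tu Y \<omega>\<bar> \<partial>M) + w\<^sup>2
      + 2 * (\<integral>\<omega>. \<bar>mu_s M Ms sg Y \<omega> - mu_s M Mt tu Y \<omega>\<bar> \<partial>M) / w + 2 / real N"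
    (is "?T \<le> \<delta> + ?D + w\<^sup>2 + 2 * ?D / w + 2 / real N")
proof -
  define \<mu>s where "\<mu>s = mu_s M Ms sg Y"
  define \<mu>t where "\<mu>t = mu_s M Mt tu Y"
  define h where "h = w / real N"
  have h: "0 < h" and Nh: "real N * h = w" using w N by (auto simp: h_def)
  have [measurable]: "\<mu>s \<in> borel_measurable M" "\<mu>t \<in> borel_measurable M"
    unfolding \<mu>s_def \<mu>t_def mu_s_def by measurable
  have bounded: "ae_bounded M \<mu>s" "ae_bounded M \<mu>t"
    unfolding \<mu>s_def \<mu>t_def mu_s_def using subalgebra_Fsg subalgebra_Ftu by auto
  define A where "A k = {\<omega>\<in>space M. shifted_bucket h N k (\<mu>t \<omega>) \<noteq> shifted_bucket h N k (\<mu>s \<omega>)}" for k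
  have A_sets [measurable]: "A k \<in> sets M" for k unfolding A_def by measurable
  have per_shift: "?T \<le> \<delta> + ?D + w\<^sup>2 + 2 * measure M (A k)" for k
  proof -
    have "?T \<le> \<delta> + 2 * measure M {\<omega>\<in>space M. shifted_cell h N k (\<mu>t \<omega>) \<noteq> shifted_cell h N k (\<mu>s \<omega>)}
        + ?D + w\<^sup>2"
      unfolding \<mu>s_def \<mu>t_def
      by (rule approx_rect_subst_bucket_bound[OF subst measurable_shifted_cell shifted_cell_less,
            where lo = "cell_start h N k"])
        (use shifted_cell_interval[OF h N] Nh in auto)
    also have "measure M {\<omega>\<in>space M. shifted_cell h N k (\<mu>t \<omega>) \<noteq> shifted_cell h N k (\<mu>s \<omega>)}
        \<le> measure M (A k)"
      by (intro finite_measure_mono) (auto simp: A_def shifted_cell_def)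
    finally show ?thesis by simp
  qed
  have "(\<Sum>k<N. measure M (A k)) \<le> (\<integral>\<omega>. \<bar>\<mu>t \<omega> - \<mu>s \<omega>\<bar> \<partial>M) / h + 1"
    unfolding A_def using bounded
    by (intro sum_prob_shifted_bucket_ne_le h N integrable_ae_bounded ae_bounded_abs ae_bounded_diff) auto
  also have "\<dots> = real N * ?D / w + 1"
    using N by (simp add: h_def \<mu>s_def \<mu>t_def abs_minus_commute)
  finally have sum_A: "(\<Sum>k<N. measure M (A k)) \<le> real N * ?D / w + 1" .
  have "real N * ?T = (\<Sum>k<N. ?T)" by simp
  also have "\<dots> \<le> (\<Sum>k<N. \<delta> + ?D + w\<^sup>2 + 2 * measure M (A k))" by (intro sum_mono per_shift)
  also have "\<dots> = real N * (\<delta> + ?D + w\<^sup>2) + 2 * (\<Sum>k<N. measure M (A k))"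
    by (simp add: sum.distrib sum_distrib_left)
  also have "\<dots> \<le> real N * (\<delta> + ?D + w\<^sup>2 + 2 * ?D / w + 2 / real N)"
  proof -
    have eq: "real N * (\<delta> + ?D + w\<^sup>2 + 2 * ?D / w + 2 / real N)
        = real N * (\<delta> + ?D + w\<^sup>2) + 2 * (real N * ?D / w + 1)"
      using N by (simp add: field_simps)
    show ?thesis unfolding eq using sum_A by (intro add_left_mono mult_left_mono) auto
  qed
  finally show ?thesis using N by simp
qed

lemma approx_rect_subst_width_bound:
  assumes subst: "approx_rect_subst M Ms Mt sg tu Y \<delta>" and w: "0 < w"
  shows "(\<integral>\<omega>. (mu_st M Ms Mt sg tu Y \<omega> - mu_s M Mt tu Y \<omega>)\<^sup>2 \<partial>M)
    \<le> \<delta> + (\<integral>\<omega>. \<bar>mu_s M Ms sg Y \<omega> - mu_s M Mt tu Y \<omega>\<bar> \<partial>M) + w\<^sup>2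
      + 2 * (\<integral>\<omega>. \<bar>mu_s M Ms sg Y \<omega> - mu_s M Mt tu Y \<omega>\<bar> \<partial>M) / w"
proof (rule field_le_epsilon)
  fix e :: real assume "0 < e"
  define N where "N = nat \<lceil>2 / e\<rceil> + 1"
  have "2 / e < real N" unfolding N_def by linarith
  then have "2 < e * real N" using \<open>0 < e\<close> by (simp add: divide_less_eq mult.commute)
  moreover have "0 < real N" unfolding N_def by simp
  ultimately have "2 / real N \<le> e" by (simp add: divide_le_eq mult.commute)
  then show "(\<integral>\<omega>. (mu_st M Ms Mt sg tu Y \<omega> - mu_s M Mt tu Y \<omega>)\<^sup>2 \<partial>M)
    \<le> \<delta> + (\<integral>\<omega>. \<bar>mu_s M Ms sg Y \<omega> - mu_s M Mt tu Y \<omega>\<bar> \<partial>M) + w\<^sup>2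
      + 2 * (\<integral>\<omega>. \<bar>mu_s M Ms sg Y \<omega> - mu_s M Mt tu Y \<omega>\<bar> \<partial>M) / w + e"
    using approx_rect_subst_shift_average[OF subst w, of N] by (simp add: N_def)
qed

lemma integrable_square_cond_exp_diff: "integrable M (\<lambda>\<omega>. (mu_s M Ms sg Y \<omega> - mu_s M Mt tu Y \<omega>)\<^sup>2)"
  unfolding mu_s_def using subalgebra_Fsg subalgebra_Ftu
  by (intro integrable_ae_bounded ae_bounded_power2 ae_bounded_diff ae_bounded_cond_exp)

lemma expectation_square_cond_exp_diff_le_1:
  "(\<integral>\<omega>. (mu_s M Ms sg Y \<omega> - mu_s M Mt tu Y \<omega>)\<^sup>2 \<partial>M) \<le> 1"
proof -
  have "(\<integral>\<omega>. (mu_s M Ms sg Y \<omega> - mu_s M Mt tu Y \<omega>)\<^sup>2 \<partial>M) \<le> (\<integral>\<omega>. 1 \<partial>M)"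
  proof (rule integral_mono_AE[OF integrable_square_cond_exp_diff])
    show "AE \<omega> in M. (mu_s M Ms sg Y \<omega> - mu_s M Mt tu Y \<omega>)\<^sup>2 \<le> 1"
      using cond_exp_unit[OF subalgebra_Fsg] cond_exp_unit[OF subalgebra_Ftu]
      by eventually_elim (auto simp: mu_s_def abs_square_le_1)
  qed simp
  then show ?thesis by (simp add: prob_space)
qed

end

theorem lemma3p10:
  fixes M :: "'a measure" and Ms :: "'s measure" and Mt :: "'t measure"
    and sg :: "'a \<Rightarrow> 's" and tu :: "'a \<Rightarrow> 't" and Y :: "'a \<Rightarrow> real" and \<delta> \<epsilon> :: real
  assumes "info_structure M Ms Mt sg tu Y"
    and "approx_rect_subst M Ms Mt sg tu Y \<delta>"
    and "\<epsilon> = (\<integral>\<omega>. (mu_s M Ms sg Y \<omega> - mu_s M Mt tu Y \<omega>)\<^sup>2 \<partial>M)"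
  shows "(\<integral>\<omega>. (mu_st M Ms Mt sg tu Y \<omega> - mu_s M Mt tu Y \<omega>)\<^sup>2 \<partial>M) \<le> 6 * \<epsilon> powr (1/3) + \<delta>"
proof (rule le_of_forall_bucket_width)
  interpret information_structure M Ms Mt sg tu Y by unfold_locales fact
  have [measurable]: "(\<lambda>\<omega>. mu_s M Ms sg Y \<omega> - mu_s M Mt tu Y \<omega>) \<in> borel_measurable M"
    unfolding mu_s_def by measurable
  show "0 \<le> \<epsilon>" "\<epsilon> \<le> 1"
    unfolding assms(3) using expectation_square_cond_exp_diff_le_1 by auto
  show "0 \<le> (\<integral>\<omega>. \<bar>mu_s M Ms sg Y \<omega> - mu_s M Mt tu Y \<omega>\<bar> \<partial>M)" by simp
  show "(\<integral>\<omega>. \<bar>mu_s M Ms sg Y \<omega> - mu_s M Mt tu Y \<omega>\<bar> \<partial>M) \<le> sqrt \<epsilon>"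
    unfolding assms(3) by (intro expectation_abs_le_sqrt integrable_square_cond_exp_diff) measurable
  show "(\<integral>\<omega>. (mu_st M Ms Mt sg tu Y \<omega> - mu_s M Mt tu Y \<omega>)\<^sup>2 \<partial>M)
    \<le> \<delta> + (\<integral>\<omega>. \<bar>mu_s M Ms sg Y \<omega> - mu_s M Mt tu Y \<omega>\<bar> \<partial>M) + w\<^sup>2
      + 2 * (\<integral>\<omega>. \<bar>mu_s M Ms sg Y \<omega> - mu_s M Mt tu Y \<omega>\<bar> \<partial>M) / w" if "0 < w" for w
    by (rule approx_rect_subst_width_bound[OF assms(2) that])
qed

end
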